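(* Let $\mathcal{P}$ be a locally finite poset, $R$ a commutative ring, and $f,g,r,s\in\mathbb{I}(\mathcal{P},R)$ such that $f(b,b)\,g(a,a)=1$ for all $a,b\in\mathcal{P}$. Then $$(f\Diamond g)\triangleright(r\Diamond s)=(f*r)\Diamond(s*g).$$
   Context: $\mathcal{F}l^2(\mathcal{P})=\{(x,y):x\le y\}$, $\mathcal{F}l^3(\mathcal{P})=\{(x,y,z):x\le y\le z\}$. $\mathbb{I}(\mathcal{P},R)$ is the set of functions $\mathcal{F}l^2(\mathcal{P})\to R$ with convolution $(f*g)(x,y)=\sum_{x\le a\le y}f(x,a)g(a,y)$. For $f,g\in\mathbb{I}(\mathcal{P},R)$, $f\Diamond g:\mathcal{F}l^3(\mathcal{P})\to R$ is $(f\Diamond g)(x,y,z)=f(x,y)\,g(y,z)$. For functions $F,G:\mathcal{F}l^3(\mathcal{P})\to R$, $(F\triangleright G)(x,y,z)=\sum_{x\le a\le y\le b\le z}F(x,a,a)\,G(a,y,b)\,F(b,b,z)$ (sum over $a,b\in\mathcal{P}$). *)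

theory Defs
  imports Main
begin

text \<open>Elements of the incidence algebra are represented as
  functions 'a \<Rightarrow> 'a \<Rightarrow> 'b, of which only the values at x \<le> y matter;
  functions on Fl^3 as 'a \<Rightarrow> 'a \<Rightarrow> 'a \<Rightarrow> 'b, only values at x \<le> y \<le> z matter.\<close>

definition locally_finite_poset :: "('a::order) itself \<Rightarrow> bool" where
  "locally_finite_poset _ \<longleftrightarrow> (\<forall>x y::'a. finite {x..y})"

definition inc_conv :: "('a::order \<Rightarrow> 'a \<Rightarrow> 'b::comm_ring_1) \<Rightarrow> ('a \<Rightarrow> 'a \<Rightarrow> 'b) \<Rightarrow> 'a \<Rightarrow> 'a \<Rightarrow> 'b" where
  "inc_conv f g x y = (\<Sum>a\<in>{x..y}. f x a * g a y)"

definition diamond :: "('a \<Rightarrow> 'a \<Rightarrow> 'b::comm_ring_1) \<Rightarrow> ('a \<Rightarrow> 'a \<Rightarrow> 'b) \<Rightarrow> 'a \<Rightarrow> 'a \<Rightarrow> 'a \<Rightarrow> 'b" where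
  "diamond f g x y z = f x y * g y z"

definition tri :: "('a::order \<Rightarrow> 'a \<Rightarrow> 'a \<Rightarrow> 'b::comm_ring_1) \<Rightarrow> ('a \<Rightarrow> 'a \<Rightarrow> 'a \<Rightarrow> 'b) \<Rightarrow> 'a \<Rightarrow> 'a \<Rightarrow> 'a \<Rightarrow> 'b" where
  "tri F G x y z = (\<Sum>(a,b)\<in>{(a,b). x \<le> a \<and> a \<le> y \<and> y \<le> b \<and> b \<le> z}. F x a a * G a y b * F b b z)"

end

theory Submission
  imports Defs
begin

text \<open>Both sides are sums over the pairs (a, b) with x \<le> a \<le> y \<le> b \<le> z: the right side
  because the product of two convolutions is a double sum, the left side by definition.
  Termwise they differ only by the factor f b b * g a a, which is 1.\<close>

lemma tri_domain_eq_interval_product: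
  "{(a, b). x \<le> a \<and> a \<le> y \<and> y \<le> b \<and> b \<le> z} = {x..y} \<times> {y..z}"
  by auto

lemma tri_diamond_diamond:
  "tri (diamond f g) (diamond r s) x y z =
     (\<Sum>(a, b)\<in>{x..y} \<times> {y..z}. f x a * r a y * (s y b * g b z) * (f b b * g a a))"
  unfolding tri_def diamond_def tri_domain_eq_interval_product
  by (intro sum.cong) (auto simp: ac_simps)

lemma diamond_inc_conv:
  "diamond (inc_conv f r) (inc_conv s g) x y z =
     (\<Sum>(a, b)\<in>{x..y} \<times> {y..z}. f x a * r a y * (s y b * g b z))"
  unfolding diamond_def inc_conv_def
  by (simp add: sum_product sum.cartesian_product)

theorem proposition4p1:
  fixes f g r s :: "'a::order \<Rightarrow> 'a \<Rightarrow> 'b::comm_ring_1"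
  assumes "locally_finite_poset TYPE('a)"
    and "\<And>a b. f b b * g a a = 1"
  shows "\<forall>x y z. x \<le> y \<longrightarrow> y \<le> z \<longrightarrow>
           tri (diamond f g) (diamond r s) x y z = diamond (inc_conv f r) (inc_conv s g) x y z"
  using assms(2) by (simp add: tri_diamond_diamond diamond_inc_conv)

end
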